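(* Let $G$ be a finite group and let $H,K$ be distinct subgroups of $G$. Then there is a simple $\mathbb CG$-module $W$ such that the space $W^H$ of $H$-invariants and the space $W^K$ of $K$-invariants are distinct. *)

theory Defs
  imports "HOL-Algebra.Group" "Jordan_Normal_Form.Matrix"
begin

text \<open>A finite-dimensional complex representation of a group G on the space of
column vectors of dimension n (every finite-dimensional CG-module is isomorphic
to one of these), given by a homomorphism from G into n x n complex matrices.\<close>
definition is_rep :: "('g, 'b) monoid_scheme \<Rightarrow> nat \<Rightarrow> ('g \<Rightarrow> complex mat) \<Rightarrow> bool" where
  "is_rep G n \<rho> \<longleftrightarrow>
     (\<forall>g\<in>carrier G. \<rho> g \<in> carrier_mat n n) \<and>
     \<rho> \<one>\<^bsub>G\<^esub> = 1\<^sub>m n \<and>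
     (\<forall>g\<in>carrier G. \<forall>h\<in>carrier G. \<rho> (g \<otimes>\<^bsub>G\<^esub> h) = \<rho> g * \<rho> h)"

definition cvec_subspace :: "nat \<Rightarrow> complex vec set \<Rightarrow> bool" where
  "cvec_subspace n S \<longleftrightarrow> S \<subseteq> carrier_vec n \<and> 0\<^sub>v n \<in> S \<and>
     (\<forall>v\<in>S. \<forall>w\<in>S. v + w \<in> S) \<and> (\<forall>c. \<forall>v\<in>S. c \<cdot>\<^sub>v v \<in> S)"

definition G_stable :: "('g, 'b) monoid_scheme \<Rightarrow> ('g \<Rightarrow> complex mat) \<Rightarrow> complex vec set \<Rightarrow> bool" where
  "G_stable G \<rho> S \<longleftrightarrow> (\<forall>g\<in>carrier G. \<forall>v\<in>S. \<rho> g *\<^sub>v v \<in> S)"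

definition simple_rep :: "('g, 'b) monoid_scheme \<Rightarrow> nat \<Rightarrow> ('g \<Rightarrow> complex mat) \<Rightarrow> bool" where
  "simple_rep G n \<rho> \<longleftrightarrow> is_rep G n \<rho> \<and> n > 0 \<and>
     (\<forall>S. cvec_subspace n S \<and> G_stable G \<rho> S \<longrightarrow> S = {0\<^sub>v n} \<or> S = carrier_vec n)"

definition fixed_space :: "nat \<Rightarrow> ('g \<Rightarrow> complex mat) \<Rightarrow> 'g set \<Rightarrow> complex vec set" where
  "fixed_space n \<rho> H = {v \<in> carrier_vec n. \<forall>h\<in>H. \<rho> h *\<^sub>v v = v}"

end

theory Submission
  imports Defs "Jordan_Normal_Form.Matrix_Kernel"
begin

text \<open>Say \<open>h \<in> H\<close> and \<open>h \<notin> K\<close>. In the left regular module \<open>\<complex>G\<close> the indicator vector of \<open>K\<close> is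
  fixed by \<open>K\<close> but moved by \<open>h\<close>. Whenever a representation has a vector \<open>v\<close> fixed by \<open>K\<close> but not
  by \<open>H\<close> and is not simple, pick a proper nonzero stable subspace \<open>S\<close>. Averaging an arbitrary
  projection onto \<open>S\<close> over \<open>G\<close> gives a \<open>G\<close>-equivariant projection \<open>M\<close> (Maschke), and one of the
  two \<open>K\<close>-fixed parts \<open>M v \<in> S\<close> and \<open>v - M v \<in> ker M\<close> is still not \<open>H\<close>-fixed. Written in a basis,
  that proper stable subspace is a representation of smaller dimension with the same property,
  so induction on the dimension ends at a simple module.\<close>

lemma eq_mat_by_mult_vec:
  fixes A A' :: "'a :: semiring_1 mat"
  assumes A: "A \<in> carrier_mat nr nc" and A': "A' \<in> carrier_mat nr nc"
    and eq: "\<And>v. v \<in> carrier_vec nc \<Longrightarrow> A *\<^sub>v v = A' *\<^sub>v v"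
  shows "A = A'"
proof (rule eq_matI)
  fix i j assume i: "i < dim_row A'" and j: "j < dim_col A'"
  have "A $$ (i,j) = (A *\<^sub>v unit_vec nc j) $ i" using A A' i j by simp
  also have "\<dots> = (A' *\<^sub>v unit_vec nc j) $ i" using eq by simp
  also have "\<dots> = A' $$ (i,j)" using A' i j by simp
  finally show "A $$ (i,j) = A' $$ (i,j)" .
qed (use A A' in auto)

lemma assoc_mult_mat_vec3:
  assumes "A \<in> carrier_mat n\<^sub>1 n\<^sub>2" and "B \<in> carrier_mat n\<^sub>2 n\<^sub>3" and "C \<in> carrier_mat n\<^sub>3 n\<^sub>4"
    and "v \<in> carrier_vec n\<^sub>4"
  shows "(A * B * C) *\<^sub>v v = A *\<^sub>v (B *\<^sub>v (C *\<^sub>v v))"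
proof -
  have "(A * B * C) *\<^sub>v v = (A * B) *\<^sub>v (C *\<^sub>v v)"
    by (rule assoc_mult_mat_vec) (use assms in auto)
  also have "\<dots> = A *\<^sub>v (B *\<^sub>v (C *\<^sub>v v))"
    by (rule assoc_mult_mat_vec) (use assms in auto)
  finally show ?thesis .
qed

lemma index_mult_mat_vec_sum:
  assumes "A \<in> carrier_mat nr nc" and "v \<in> carrier_vec nc" and "i < nr"
  shows "(A *\<^sub>v v) $ i = (\<Sum>k<nc. A $$ (i,k) * v $ k)"
  using assms by (auto simp: scalar_prod_def atLeast0LessThan intro!: sum.cong)

lemma smult_mat_mult_vec:
  fixes A :: "'a :: comm_semiring_0 mat"
  assumes "A \<in> carrier_mat nr nc" and "v \<in> carrier_vec nc"
  shows "(k \<cdot>\<^sub>m A) *\<^sub>v v = k \<cdot>\<^sub>v (A *\<^sub>v v)"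
  using assms by (intro eq_vecI) (auto simp: scalar_prod_def sum_distrib_left mult.assoc)

lemma dim_finsum_vec:
  assumes "\<And>a. a \<in> A \<Longrightarrow> f a \<in> carrier_vec n"
  shows "dim_vec (finsum_vec TYPE('a :: comm_monoid_add) n f A) = n"
  using finsum_vec_closed[of f A n] assms by auto

lemma finsum_vec_const:
  assumes "finite A" and s: "s \<in> carrier_vec n" and "\<And>a. a \<in> A \<Longrightarrow> f a = s"
  shows "finsum_vec TYPE('a :: semiring_1) n f A = of_nat (card A) \<cdot>\<^sub>v s"
  by (rule eq_vecI) (use assms in \<open>auto simp: index_finsum_vec dim_finsum_vec\<close>)

lemma finsum_vec_reindex_cong:
  assumes \<phi>: "bij_betw \<phi> A A" and "finite A" and f: "\<And>a. a \<in> A \<Longrightarrow> f a \<in> carrier_vec n"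
    and g: "\<And>a. a \<in> A \<Longrightarrow> g a = f (\<phi> a)"
  shows "finsum_vec TYPE('a :: comm_monoid_add) n g A = finsum_vec TYPE('a) n f A"
proof -
  have \<phi>A: "\<phi> a \<in> A" if "a \<in> A" for a using \<phi> that by (auto dest: bij_betwE)
  have g_carrier: "g a \<in> carrier_vec n" if "a \<in> A" for a using f[OF \<phi>A[OF that]] g[OF that] by simp
  show ?thesis
  proof (rule eq_vecI)
    fix i assume "i < dim_vec (finsum_vec TYPE('a) n f A)"
    hence i: "i < n" using f by (simp add: dim_finsum_vec)
    have "finsum_vec TYPE('a) n g A $ i = (\<Sum>a\<in>A. f (\<phi> a) $ i)"
      using g g_carrier by (simp add: index_finsum_vec[OF \<open>finite A\<close> i])
    also have "\<dots> = finsum_vec TYPE('a) n f A $ i"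
      using sum.reindex_bij_betw[OF \<phi>, of "\<lambda>a. f a $ i"] f by (simp add: index_finsum_vec[OF \<open>finite A\<close> i])
    finally show "finsum_vec TYPE('a) n g A $ i = finsum_vec TYPE('a) n f A $ i" .
  qed (use f g_carrier in \<open>simp add: dim_finsum_vec\<close>)
qed

lemma mult_mat_finsum_vec:
  assumes X: "X \<in> carrier_mat m n" and A: "finite A" and f: "\<And>a. a \<in> A \<Longrightarrow> f a \<in> carrier_vec n"
  shows "X *\<^sub>v finsum_vec TYPE('a :: comm_semiring_0) n f A = finsum_vec TYPE('a) m (\<lambda>a. X *\<^sub>v f a) A"
proof -
  have Xf: "X *\<^sub>v f a \<in> carrier_vec m" if "a \<in> A" for a using X f[OF that] by simp
  have sum: "finsum_vec TYPE('a) n f A \<in> carrier_vec n" by (rule finsum_vec_closed) (use f in auto)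
  show ?thesis
  proof (rule eq_vecI)
    fix i assume "i < dim_vec (finsum_vec TYPE('a) m (\<lambda>a. X *\<^sub>v f a) A)"
    hence i: "i < m" using Xf by (simp add: dim_finsum_vec)
    have "(X *\<^sub>v finsum_vec TYPE('a) n f A) $ i = (\<Sum>k<n. X $$ (i,k) * (\<Sum>a\<in>A. f a $ k))"
      using f by (simp add: index_mult_mat_vec_sum[OF X sum i] index_finsum_vec[OF A])
    also have "\<dots> = (\<Sum>a\<in>A. \<Sum>k<n. X $$ (i,k) * f a $ k)"
      by (simp add: sum_distrib_left sum.swap[of _ A])
    also have "\<dots> = finsum_vec TYPE('a) m (\<lambda>a. X *\<^sub>v f a) A $ i"
      using Xf f by (simp add: index_mult_mat_vec_sum[OF X _ i] index_finsum_vec[OF A i])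
    finally show "(X *\<^sub>v finsum_vec TYPE('a) n f A) $ i = finsum_vec TYPE('a) m (\<lambda>a. X *\<^sub>v f a) A $ i" .
  qed (use X Xf in \<open>simp add: dim_finsum_vec\<close>)
qed

lemma mat_sum_mult_vec:
  assumes A: "finite A" and F: "\<And>a. a \<in> A \<Longrightarrow> F a \<in> carrier_mat n m" and w: "w \<in> carrier_vec m"
  shows "mat n m (\<lambda>ij. \<Sum>a\<in>A. F a $$ ij) *\<^sub>v w = finsum_vec TYPE('a :: comm_semiring_0) n (\<lambda>a. F a *\<^sub>v w) A"
proof -
  have Fw: "F a *\<^sub>v w \<in> carrier_vec n" if "a \<in> A" for a using F[OF that] w by simp
  show ?thesis
  proof (rule eq_vecI)
    fix i assume "i < dim_vec (finsum_vec TYPE('a) n (\<lambda>a. F a *\<^sub>v w) A)"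
    hence i: "i < n" using Fw by (simp add: dim_finsum_vec)
    have "(mat n m (\<lambda>ij. \<Sum>a\<in>A. F a $$ ij) *\<^sub>v w) $ i = (\<Sum>k<m. (\<Sum>a\<in>A. F a $$ (i,k)) * w $ k)"
      using i by (subst index_mult_mat_vec_sum[OF _ w i]) (auto intro: sum.cong)
    also have "\<dots> = (\<Sum>a\<in>A. \<Sum>k<m. F a $$ (i,k) * w $ k)"
      by (simp add: sum_distrib_right sum.swap[of _ A])
    also have "\<dots> = finsum_vec TYPE('a) n (\<lambda>a. F a *\<^sub>v w) A $ i"
      using Fw F by (simp add: index_mult_mat_vec_sum[OF _ w i] index_finsum_vec[OF A i])
    finally show "(mat n m (\<lambda>ij. \<Sum>a\<in>A. F a $$ ij) *\<^sub>v w) $ i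
        = finsum_vec TYPE('a) n (\<lambda>a. F a *\<^sub>v w) A $ i" .
  qed (use Fw in \<open>simp add: dim_finsum_vec\<close>)
qed

section \<open>Subspaces and bases\<close>

lemma cvec_subspace_diff:
  assumes "cvec_subspace n S" and "x \<in> S" and "y \<in> S"
  shows "x - y \<in> S"
proof -
  have "x - y = x + (- 1) \<cdot>\<^sub>v y"
    using assms unfolding cvec_subspace_def by (intro eq_vecI) auto
  thus ?thesis using assms unfolding cvec_subspace_def by simp
qed

lemma finsum_vec_in_subspace:
  assumes S: "cvec_subspace n S" and "finite A" and "\<And>a. a \<in> A \<Longrightarrow> f a \<in> S"
  shows "finsum_vec TYPE(complex) n f A \<in> S"
  using assms(2,3)
proof (induction A rule: finite_induct)
  case empty
  thus ?case using S unfolding cvec_subspace_def by (simp add: finsum_vec_empty)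
next
  case (insert a A)
  have "f \<in> A \<rightarrow> carrier_vec n" and "f a \<in> carrier_vec n"
    using S insert.prems unfolding cvec_subspace_def by auto
  hence "finsum_vec TYPE(complex) n f (insert a A) = f a + finsum_vec TYPE(complex) n f A"
    by (rule finsum_vec_insert[OF insert.hyps(1,2)])
  thus ?case using S insert unfolding cvec_subspace_def by simp
qed

lemma mat_kernel_subspace:
  fixes M :: "complex mat"
  assumes M: "M \<in> carrier_mat m n"
  shows "cvec_subspace n (mat_kernel M)"
  unfolding cvec_subspace_def
proof (intro conjI ballI allI)
  show "mat_kernel M \<subseteq> carrier_vec n" by (rule mat_kernel_carrier[OF M])
  show "0\<^sub>v n \<in> mat_kernel M" by (rule mat_kernelI[OF M]) (use M in auto)
  show "c \<cdot>\<^sub>v v \<in> mat_kernel M" if "v \<in> mat_kernel M" for c v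
    by (rule mat_kernel_smult[OF M that])
  show "v + w \<in> mat_kernel M" if v: "v \<in> mat_kernel M" and w: "w \<in> mat_kernel M" for v w
  proof (rule mat_kernelI[OF M])
    show "v + w \<in> carrier_vec n" using mat_kernelD(1)[OF M v] mat_kernelD(1)[OF M w] by simp
    show "M *\<^sub>v (v + w) = 0\<^sub>v m"
      using mat_kernelD[OF M v] mat_kernelD[OF M w] M by (simp add: mult_add_distrib_mat_vec)
  qed
qed

lemma mat_kernel_trivial_dim_le:
  fixes B :: "complex mat"
  assumes B: "B \<in> carrier_mat n d" and ker: "mat_kernel B = {0\<^sub>v d}"
  shows "d \<le> n"
proof (rule ccontr)
  assume "\<not> d \<le> n"
  hence nd: "n < d" by simp
  \<comment> \<open>padding \<open>B\<close> with zero rows gives a singular square matrix with the same kernel on \<open>carrier_vec d\<close>\<close>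
  define B' where "B' = mat d d (\<lambda>(i,j). if i < n then B $$ (i,j) else 0)"
  have B': "B' \<in> carrier_mat d d" unfolding B'_def by simp
  have "transpose_mat B' *\<^sub>v unit_vec d (d - 1) = 0\<^sub>v d"
    by (rule eq_vecI) (use nd in \<open>auto simp: B'_def mult_mat_vec_def scalar_prod_def intro!: sum.neutral\<close>)
  hence "det (transpose_mat B') = 0"
    using nd B' by (subst det_0_iff_vec_prod_zero[of _ d]) (auto intro!: exI[of _ "unit_vec d (d - 1)"])
  then obtain c where c: "c \<in> carrier_vec d" "c \<noteq> 0\<^sub>v d" "B' *\<^sub>v c = 0\<^sub>v d"
    using det_0_iff_vec_prod_zero[OF B'] det_transpose[OF B'] by auto
  have "B *\<^sub>v c = 0\<^sub>v n"
  proof (rule eq_vecI)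
    fix i assume "i < dim_vec (0\<^sub>v n :: complex vec)"
    hence i: "i < n" by simp
    have "(B *\<^sub>v c) $ i = (B' *\<^sub>v c) $ i"
      using i nd B c(1) by (auto simp: B'_def mult_mat_vec_def scalar_prod_def intro!: sum.cong)
    thus "(B *\<^sub>v c) $ i = 0\<^sub>v n $ i" using c(3) i nd by simp
  qed (use B in simp)
  hence "c \<in> mat_kernel B" by (rule mat_kernelI[OF B c(1)])
  thus False using ker c(2) by simp
qed

lemma cscalar_prod_mult_mat_vec:
  fixes B :: "complex mat"
  assumes B: "B \<in> carrier_mat n d" and c: "c \<in> carrier_vec d" and w: "w \<in> carrier_vec n"
  shows "(B *\<^sub>v c) \<bullet>c w = c \<bullet>c (mat d n (\<lambda>(j,i). cnj (B $$ (i,j))) *\<^sub>v w)"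
proof -
  have "(B *\<^sub>v c) \<bullet>c w = (\<Sum>i<n. \<Sum>j<d. B $$ (i,j) * c $ j * cnj (w $ i))"
    using B c w by (simp add: scalar_prod_def mult_mat_vec_def sum_distrib_right atLeast0LessThan)
  also have "\<dots> = (\<Sum>j<d. \<Sum>i<n. c $ j * cnj (cnj (B $$ (i,j)) * w $ i))"
    by (subst sum.swap) (simp add: mult_ac)
  also have "\<dots> = c \<bullet>c (mat d n (\<lambda>(j,i). cnj (B $$ (i,j))) *\<^sub>v w)"
    using B c w by (simp add: scalar_prod_def mult_mat_vec_def sum_distrib_left atLeast0LessThan)
  finally show ?thesis .
qed

lemma mat_kernel_trivial_left_inverse:
  fixes B :: "complex mat"
  assumes B: "B \<in> carrier_mat n d" and ker: "mat_kernel B = {0\<^sub>v d}"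
  obtains L where "L \<in> carrier_mat d n" and "L * B = 1\<^sub>m d"
proof -
  \<comment> \<open>the conjugate transpose \<open>A\<close>: \<open>A B c = 0\<close> forces \<open>(B c) \<bullet>c (B c) = 0\<close>, so \<open>(A B)\<inverse> A\<close> is a left inverse\<close>
  define A where "A = mat d n (\<lambda>(j,i). cnj (B $$ (i,j)))"
  have A: "A \<in> carrier_mat d n" unfolding A_def by simp
  have AB: "A * B \<in> carrier_mat d d" using A B by simp
  have "det (A * B) \<noteq> 0"
  proof
    assume "det (A * B) = 0"
    then obtain c where c: "c \<in> carrier_vec d" "c \<noteq> 0\<^sub>v d" "(A * B) *\<^sub>v c = 0\<^sub>v d"
      using det_0_iff_vec_prod_zero[OF AB] by auto
    have "(B *\<^sub>v c) \<bullet>c (B *\<^sub>v c) = c \<bullet>c (A *\<^sub>v (B *\<^sub>v c))"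
      unfolding A_def using B c(1) by (intro cscalar_prod_mult_mat_vec) auto
    also have "A *\<^sub>v (B *\<^sub>v c) = 0\<^sub>v d" using A B c by simp
    finally have "B *\<^sub>v c = 0\<^sub>v n"
      using B c(1) conjugate_square_eq_0_vec[of "B *\<^sub>v c" n] by simp
    hence "c \<in> mat_kernel B" by (rule mat_kernelI[OF B c(1)])
    thus False using ker c(2) by simp
  qed
  then obtain C where C: "C \<in> carrier_mat d d" "C * (A * B) = 1\<^sub>m d"
    using det_non_zero_imp_unit[OF AB, of undefined] unfolding Units_def ring_mat_def by auto
  show thesis
  proof
    show "C * A \<in> carrier_mat d n" using C A by simp
    show "C * A * B = 1\<^sub>m d" using C A B by (simp add: assoc_mult_mat[of _ d d _ n _ d])
  qed
qed

definition lin_indpt_cols_in :: "nat \<Rightarrow> complex vec set \<Rightarrow> nat \<Rightarrow> complex mat \<Rightarrow> bool" where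
  "lin_indpt_cols_in n S d B \<longleftrightarrow>
     B \<in> carrier_mat n d \<and> mat_kernel B = {0\<^sub>v d} \<and> (\<lambda>c. B *\<^sub>v c) ` carrier_vec d \<subseteq> S"

lemma mult_mat_vec_append_col:
  fixes B :: "complex mat"
  assumes B: "B \<in> carrier_mat n d" and s: "s \<in> carrier_vec n" and c: "c \<in> carrier_vec (Suc d)"
  shows "mat n (Suc d) (\<lambda>(i,j). if j < d then B $$ (i,j) else s $ i) *\<^sub>v c
     = B *\<^sub>v vec_first c d + c $ d \<cdot>\<^sub>v s"
  by (rule eq_vecI)
     (use B s c in \<open>auto simp: mult_mat_vec_def scalar_prod_def vec_first_def sum.atLeast0_lessThan_Suc
        intro!: sum.cong\<close>)

lemma mat_kernel_append_col:
  fixes B :: "complex mat"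
  assumes B: "B \<in> carrier_mat n d" and ker: "mat_kernel B = {0\<^sub>v d}" and s: "s \<in> carrier_vec n"
    and s_new: "s \<notin> (\<lambda>c. B *\<^sub>v c) ` carrier_vec d"
  shows "mat_kernel (mat n (Suc d) (\<lambda>(i,j). if j < d then B $$ (i,j) else s $ i)) = {0\<^sub>v (Suc d)}"
    (is "mat_kernel ?B' = _")
proof -
  have B': "?B' \<in> carrier_mat n (Suc d)" by simp
  have "c = 0\<^sub>v (Suc d)" if c: "c \<in> mat_kernel ?B'" for c
  proof -
    have cc: "c \<in> carrier_vec (Suc d)" and "?B' *\<^sub>v c = 0\<^sub>v n" using mat_kernelD[OF B' c] by auto
    hence zero: "B *\<^sub>v vec_first c d + c $ d \<cdot>\<^sub>v s = 0\<^sub>v n"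
      using mult_mat_vec_append_col[OF B s] by simp
    have last: "c $ d = 0"
    proof (rule ccontr)
      assume cd: "c $ d \<noteq> 0"
      have "s = B *\<^sub>v ((- 1 / c $ d) \<cdot>\<^sub>v vec_first c d)"
      proof (rule eq_vecI)
        fix i assume "i < dim_vec (B *\<^sub>v ((- 1 / c $ d) \<cdot>\<^sub>v vec_first c d))"
        hence i: "i < n" using B by simp
        have "(B *\<^sub>v vec_first c d) $ i + c $ d * s $ i = 0"
          using arg_cong[OF zero, of "\<lambda>v. v $ i"] i B s by simp
        thus "s $ i = (B *\<^sub>v ((- 1 / c $ d) \<cdot>\<^sub>v vec_first c d)) $ i"
          using i B cd by (simp add: mult_mat_vec field_simps add_eq_0_iff)
      qed (use B s in simp)
      thus False using s_new by auto
    qed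
    have "B *\<^sub>v vec_first c d = 0\<^sub>v n"
    proof -
      have "(0 :: complex) \<cdot>\<^sub>v s = 0\<^sub>v n" using s by (intro eq_vecI) auto
      thus ?thesis using zero last B by simp
    qed
    hence "vec_first c d = 0\<^sub>v d" using mat_kernelI[OF B vec_first_carrier] ker by blast
    hence "\<forall>i<d. c $ i = 0" by (metis vec_first_def index_vec index_zero_vec(1))
    thus ?thesis using cc last by (intro eq_vecI) (auto simp: less_Suc_eq)
  qed
  moreover have "0\<^sub>v (Suc d) \<in> mat_kernel ?B'" by (rule mat_kernelI[OF B']) auto
  ultimately show ?thesis by blast
qed

lemma lin_indpt_cols_in_append_col:
  assumes S: "cvec_subspace n S" and B: "lin_indpt_cols_in n S d B" and s: "s \<in> S"
    and s_new: "s \<notin> (\<lambda>c. B *\<^sub>v c) ` carrier_vec d"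
  shows "lin_indpt_cols_in n S (Suc d) (mat n (Suc d) (\<lambda>(i,j). if j < d then B $$ (i,j) else s $ i))"
    (is "lin_indpt_cols_in n S (Suc d) ?B'")
proof -
  have Bc: "B \<in> carrier_mat n d" and ker: "mat_kernel B = {0\<^sub>v d}"
    and range: "\<And>c. c \<in> carrier_vec d \<Longrightarrow> B *\<^sub>v c \<in> S"
    using B unfolding lin_indpt_cols_in_def by auto
  have sc: "s \<in> carrier_vec n" using S s unfolding cvec_subspace_def by auto
  have "?B' *\<^sub>v c \<in> S" if c: "c \<in> carrier_vec (Suc d)" for c
    unfolding mult_mat_vec_append_col[OF Bc sc c]
    using S range s unfolding cvec_subspace_def by simp
  thus ?thesis unfolding lin_indpt_cols_in_def using mat_kernel_append_col[OF Bc ker sc s_new] by auto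
qed

lemma subspace_lin_indpt_cols_spanning:
  assumes S: "cvec_subspace n S"
  obtains d B where "lin_indpt_cols_in n S d B" and "(\<lambda>c. B *\<^sub>v c) ` carrier_vec d = S"
proof -
  \<comment> \<open>take an independent family of maximal length; it spans \<open>S\<close>, as otherwise it could be extended\<close>
  let ?D = "{d. \<exists>B. lin_indpt_cols_in n S d B}"
  have "0\<^sub>m n 0 *\<^sub>v c = 0\<^sub>v n" if "c \<in> carrier_vec 0" for c :: "complex vec"
    using that by (intro eq_vecI) (auto simp: scalar_prod_def)
  hence "lin_indpt_cols_in n S 0 (0\<^sub>m n 0)"
    using S unfolding lin_indpt_cols_in_def cvec_subspace_def mat_kernel_def by auto
  hence "0 \<in> ?D" by blast
  moreover have "?D \<subseteq> {..n}"
    using mat_kernel_trivial_dim_le unfolding lin_indpt_cols_in_def by blast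
  hence fin: "finite ?D" by (rule finite_subset) simp
  ultimately have "Max ?D \<in> ?D" by (intro Max_in) auto
  then obtain B where B: "lin_indpt_cols_in n S (Max ?D) B" by blast
  have "S \<subseteq> (\<lambda>c. B *\<^sub>v c) ` carrier_vec (Max ?D)"
  proof
    fix s assume "s \<in> S"
    show "s \<in> (\<lambda>c. B *\<^sub>v c) ` carrier_vec (Max ?D)"
    proof (rule ccontr)
      assume "s \<notin> (\<lambda>c. B *\<^sub>v c) ` carrier_vec (Max ?D)"
      with lin_indpt_cols_in_append_col[OF S B \<open>s \<in> S\<close>] have "Suc (Max ?D) \<in> ?D" by blast
      hence "Suc (Max ?D) \<le> Max ?D" by (rule Max_ge[OF fin])
      thus False by simp
    qed
  qed
  hence "(\<lambda>c. B *\<^sub>v c) ` carrier_vec (Max ?D) = S"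
    using B unfolding lin_indpt_cols_in_def by blast
  with B show thesis by (rule that)
qed

text \<open>The columns of \<open>B\<close> form a basis of \<open>T\<close>, and \<open>L\<close> maps a vector of \<open>T\<close> to its coordinates.\<close>

definition coord_system :: "nat \<Rightarrow> complex vec set \<Rightarrow> nat \<Rightarrow> complex mat \<Rightarrow> complex mat \<Rightarrow> bool" where
  "coord_system n T d B L \<longleftrightarrow> B \<in> carrier_mat n d \<and> L \<in> carrier_mat d n \<and> L * B = 1\<^sub>m d \<and>
     (\<lambda>c. B *\<^sub>v c) ` carrier_vec d = T"

lemma subspace_coord_system:
  assumes "cvec_subspace n T"
  obtains d B L where "d \<le> n" and "coord_system n T d B L"
proof -
  obtain d B where B: "lin_indpt_cols_in n T d B" and T: "(\<lambda>c. B *\<^sub>v c) ` carrier_vec d = T"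
    using subspace_lin_indpt_cols_spanning[OF assms] .
  have Bc: "B \<in> carrier_mat n d" and ker: "mat_kernel B = {0\<^sub>v d}"
    using B unfolding lin_indpt_cols_in_def by auto
  obtain L where "L \<in> carrier_mat d n" "L * B = 1\<^sub>m d"
    using mat_kernel_trivial_left_inverse[OF Bc ker] .
  with mat_kernel_trivial_dim_le[OF Bc ker] show thesis
    using that Bc T unfolding coord_system_def by blast
qed

lemma coord_system_coords_basis:
  assumes "coord_system n T d B L" and "c \<in> carrier_vec d"
  shows "L *\<^sub>v (B *\<^sub>v c) = c"
proof -
  have B: "B \<in> carrier_mat n d" and L: "L \<in> carrier_mat d n" and LB: "L * B = 1\<^sub>m d"
    using assms(1) unfolding coord_system_def by auto
  have "L *\<^sub>v (B *\<^sub>v c) = (L * B) *\<^sub>v c" using assoc_mult_mat_vec[OF L B assms(2)] by simp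
  also have "\<dots> = c" using LB assms(2) by simp
  finally show ?thesis .
qed

lemma coord_system_basis_coords:
  assumes "coord_system n T d B L" and "t \<in> T"
  shows "B *\<^sub>v (L *\<^sub>v t) = t"
proof -
  obtain c where c: "c \<in> carrier_vec d" "t = B *\<^sub>v c"
    using assms unfolding coord_system_def by blast
  thus ?thesis using coord_system_coords_basis[OF assms(1) c(1)] by simp
qed

lemma coord_system_dim_less:
  assumes T: "coord_system n T d B L" and "d \<le> n" and "T \<noteq> carrier_vec n"
  shows "d < n"
proof (rule ccontr)
  assume "\<not> d < n"
  with \<open>d \<le> n\<close> have "d = n" by simp
  have B: "B \<in> carrier_mat n n" and L: "L \<in> carrier_mat n n" and LB: "L * B = 1\<^sub>m n"
    and range: "(\<lambda>c. B *\<^sub>v c) ` carrier_vec n = T"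
    using T \<open>d = n\<close> unfolding coord_system_def by auto
  have BL: "B * L = 1\<^sub>m n" by (rule mat_mult_left_right_inverse[OF L B LB])
  have "w \<in> T" if w: "w \<in> carrier_vec n" for w
  proof -
    have "w = (B * L) *\<^sub>v w" using BL w by simp
    also have "\<dots> = B *\<^sub>v (L *\<^sub>v w)" using B L w by simp
    finally have "w = B *\<^sub>v (L *\<^sub>v w)" .
    moreover have "L *\<^sub>v w \<in> carrier_vec n" using L w by simp
    ultimately show ?thesis using range by blast
  qed
  moreover have "T \<subseteq> carrier_vec n" using range mult_mat_vec_carrier[OF B] by blast
  ultimately show False using \<open>T \<noteq> carrier_vec n\<close> by blast
qed

lemma subspace_projection:
  assumes "cvec_subspace n S"
  obtains P where "P \<in> carrier_mat n n" and "\<And>w. w \<in> carrier_vec n \<Longrightarrow> P *\<^sub>v w \<in> S"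
    and "\<And>s. s \<in> S \<Longrightarrow> P *\<^sub>v s = s"
proof -
  obtain d B L where coords: "coord_system n S d B L"
    using subspace_coord_system[OF assms] .
  hence B: "B \<in> carrier_mat n d" and L: "L \<in> carrier_mat d n"
    and range: "(\<lambda>c. B *\<^sub>v c) ` carrier_vec d = S"
    unfolding coord_system_def by auto
  show thesis
  proof
    show "B * L \<in> carrier_mat n n" using B L by simp
    show "(B * L) *\<^sub>v w \<in> S" if "w \<in> carrier_vec n" for w
    proof -
      have "(B * L) *\<^sub>v w = B *\<^sub>v (L *\<^sub>v w)" using B L that by simp
      moreover have "L *\<^sub>v w \<in> carrier_vec d" using L that by simp
      ultimately show ?thesis using range by blast
    qed
    show "(B * L) *\<^sub>v s = s" if "s \<in> S" for s
    proof -
      have "s \<in> carrier_vec n" using range mult_mat_vec_carrier[OF B] that by blast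
      thus ?thesis using coord_system_basis_coords[OF coords that] B L by simp
    qed
  qed
qed

section \<open>Subrepresentations\<close>

lemma rep_carrier_mat:
  assumes "is_rep G n \<rho>" and "g \<in> carrier G"
  shows "\<rho> g \<in> carrier_mat n n"
  using assms unfolding is_rep_def by blast

lemma rep_one:
  fixes G :: "('g, 'b) monoid_scheme" (structure)
  assumes "is_rep G n \<rho>"
  shows "\<rho> \<one> = 1\<^sub>m n"
  using assms unfolding is_rep_def by blast

lemma rep_mult:
  fixes G :: "('g, 'b) monoid_scheme" (structure)
  assumes "is_rep G n \<rho>" and "g \<in> carrier G" and "h \<in> carrier G"
  shows "\<rho> (g \<otimes> h) = \<rho> g * \<rho> h"
  using assms unfolding is_rep_def by blast

lemma rep_mult_vec:
  fixes G :: "('g, 'b) monoid_scheme" (structure)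
  assumes rep: "is_rep G n \<rho>" and g: "g \<in> carrier G" and h: "h \<in> carrier G"
    and w: "w \<in> carrier_vec n"
  shows "\<rho> (g \<otimes> h) *\<^sub>v w = \<rho> g *\<^sub>v (\<rho> h *\<^sub>v w)"
  using assoc_mult_mat_vec[OF rep_carrier_mat[OF rep g] rep_carrier_mat[OF rep h] w]
  unfolding rep_mult[OF rep g h] .

lemma rep_inv_cancel:
  fixes G :: "('g, 'b) monoid_scheme" (structure)
  assumes "group G" and rep: "is_rep G n \<rho>" and g: "g \<in> carrier G" and w: "w \<in> carrier_vec n"
  shows "\<rho> g *\<^sub>v (\<rho> (inv g) *\<^sub>v w) = w"
proof -
  interpret group G by fact
  have "\<rho> g *\<^sub>v (\<rho> (inv g) *\<^sub>v w) = \<rho> (g \<otimes> inv g) *\<^sub>v w"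
    using rep_mult_vec[OF rep g inv_closed[OF g] w] by simp
  thus ?thesis using rep_one[OF rep] g w by simp
qed

lemma fixed_space_subspace:
  assumes rep: "is_rep G n \<rho>" and H: "H \<subseteq> carrier G"
  shows "cvec_subspace n (fixed_space n \<rho> H)"
  unfolding cvec_subspace_def
proof (intro conjI ballI allI)
  have \<rho>: "\<rho> h \<in> carrier_mat n n" if "h \<in> H" for h using rep_carrier_mat[OF rep] H that by blast
  show "fixed_space n \<rho> H \<subseteq> carrier_vec n" unfolding fixed_space_def by blast
  have "\<rho> h *\<^sub>v 0\<^sub>v n = 0\<^sub>v n" if "h \<in> H" for h using \<rho>[OF that] by auto
  thus "0\<^sub>v n \<in> fixed_space n \<rho> H" unfolding fixed_space_def by auto
  show "v + w \<in> fixed_space n \<rho> H" if "v \<in> fixed_space n \<rho> H" and "w \<in> fixed_space n \<rho> H" for v w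
    using that mult_add_distrib_mat_vec[OF \<rho>] unfolding fixed_space_def by auto
  show "c \<cdot>\<^sub>v v \<in> fixed_space n \<rho> H" if "v \<in> fixed_space n \<rho> H" for c v
    using that mult_mat_vec[OF \<rho>] unfolding fixed_space_def by auto
qed

lemma fixed_space_antimono:
  assumes "H' \<subseteq> H"
  shows "fixed_space n \<rho> H \<subseteq> fixed_space n \<rho> H'"
  using assms unfolding fixed_space_def by blast

context
  fixes G :: "('g, 'b) monoid_scheme" (structure) and n d \<rho> T B L
  assumes rep: "is_rep G n \<rho>" and stable: "G_stable G \<rho> T"
    and coords: "coord_system n T d B L"
begin

private lemma B_carrier: "B \<in> carrier_mat n d" and L_carrier: "L \<in> carrier_mat d n"
  and B_range: "(\<lambda>c. B *\<^sub>v c) ` carrier_vec d = T"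
  using coords unfolding coord_system_def by auto

lemma subrep_intertwines:
  assumes g: "g \<in> carrier G" and x: "x \<in> carrier_vec d"
  shows "B *\<^sub>v ((L * \<rho> g * B) *\<^sub>v x) = \<rho> g *\<^sub>v (B *\<^sub>v x)"
proof -
  have \<rho>g: "\<rho> g \<in> carrier_mat n n" by (rule rep_carrier_mat[OF rep g])
  have "(L * \<rho> g * B) *\<^sub>v x = L *\<^sub>v (\<rho> g *\<^sub>v (B *\<^sub>v x))" by (rule assoc_mult_mat_vec3[OF L_carrier \<rho>g B_carrier x])
  moreover have "\<rho> g *\<^sub>v (B *\<^sub>v x) \<in> T"
    using stable g B_range x unfolding G_stable_def by blast
  ultimately show ?thesis using coord_system_basis_coords[OF coords] by simp
qed

lemma subrep_is_rep: "is_rep G d (\<lambda>g. L * \<rho> g * B)"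
  unfolding is_rep_def
proof (intro conjI ballI)
  show "L * \<rho> g * B \<in> carrier_mat d d" if "g \<in> carrier G" for g
    using rep_carrier_mat[OF rep that] B_carrier L_carrier by simp
  show "L * \<rho> \<one> * B = 1\<^sub>m d"
    using rep_one[OF rep] coords L_carrier unfolding coord_system_def by simp
  fix g h assume g: "g \<in> carrier G" and h: "h \<in> carrier G"
  note \<rho> = rep_carrier_mat[OF rep g] rep_carrier_mat[OF rep h]
  show "L * \<rho> (g \<otimes> h) * B = L * \<rho> g * B * (L * \<rho> h * B)"
  proof (rule eq_mat_by_mult_vec[where nr = d and nc = d])
    fix x :: "complex vec" assume x: "x \<in> carrier_vec d"
    have "(L * \<rho> (g \<otimes> h) * B) *\<^sub>v x = L *\<^sub>v ((\<rho> g * \<rho> h) *\<^sub>v (B *\<^sub>v x))"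
      unfolding rep_mult[OF rep g h] by (rule assoc_mult_mat_vec3[OF L_carrier _ B_carrier x]) (use \<rho> in simp)
    also have "\<dots> = L *\<^sub>v (\<rho> g *\<^sub>v (\<rho> h *\<^sub>v (B *\<^sub>v x)))" using \<rho> B_carrier x by simp
    also have "\<dots> = L *\<^sub>v (\<rho> g *\<^sub>v (B *\<^sub>v ((L * \<rho> h * B) *\<^sub>v x)))"
      using subrep_intertwines[OF h x] by simp
    also have "\<dots> = (L * \<rho> g * B) *\<^sub>v ((L * \<rho> h * B) *\<^sub>v x)"
      by (rule assoc_mult_mat_vec3[OF L_carrier \<rho>(1) B_carrier, symmetric])
        (use L_carrier \<rho>(2) B_carrier x in \<open>meson mult_carrier_mat mult_mat_vec_carrier\<close>)
    also have "\<dots> = (L * \<rho> g * B * (L * \<rho> h * B)) *\<^sub>v x"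
      by (rule assoc_mult_mat_vec[of _ d d _ d, symmetric])
        (use L_carrier \<rho> B_carrier x in \<open>meson mult_carrier_mat\<close>)+
    finally show "(L * \<rho> (g \<otimes> h) * B) *\<^sub>v x = (L * \<rho> g * B * (L * \<rho> h * B)) *\<^sub>v x" .
  next
    show "L * \<rho> (g \<otimes> h) * B \<in> carrier_mat d d"
      unfolding rep_mult[OF rep g h] using \<rho> B_carrier L_carrier by (meson mult_carrier_mat)
    show "L * \<rho> g * B * (L * \<rho> h * B) \<in> carrier_mat d d"
      using \<rho> B_carrier L_carrier by (meson mult_carrier_mat)
  qed
qed

lemma subrep_fixed_space:
  assumes H: "H \<subseteq> carrier G" and x: "x \<in> carrier_vec d"
  shows "x \<in> fixed_space d (\<lambda>g. L * \<rho> g * B) H \<longleftrightarrow> B *\<^sub>v x \<in> fixed_space n \<rho> H"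
proof -
  have "(L * \<rho> h * B) *\<^sub>v x = x \<longleftrightarrow> \<rho> h *\<^sub>v (B *\<^sub>v x) = B *\<^sub>v x" if h: "h \<in> carrier G" for h
  proof
    assume "(L * \<rho> h * B) *\<^sub>v x = x"
    thus "\<rho> h *\<^sub>v (B *\<^sub>v x) = B *\<^sub>v x" using subrep_intertwines[OF h x] by simp
  next
    assume fixed: "\<rho> h *\<^sub>v (B *\<^sub>v x) = B *\<^sub>v x"
    have "(L * \<rho> h * B) *\<^sub>v x = L *\<^sub>v (\<rho> h *\<^sub>v (B *\<^sub>v x))"
      by (rule assoc_mult_mat_vec3[OF L_carrier rep_carrier_mat[OF rep h] B_carrier x])
    also have "\<dots> = x" using fixed coord_system_coords_basis[OF coords x] by simp
    finally show "(L * \<rho> h * B) *\<^sub>v x = x" .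
  qed
  thus ?thesis using H x B_carrier unfolding fixed_space_def by auto
qed

end

lemma proper_subrep_with_fixed_vector:
  assumes rep: "is_rep G n \<rho>" and T: "cvec_subspace n T" and stable: "G_stable G \<rho> T"
    and proper: "T \<noteq> carrier_vec n" and H: "H \<subseteq> carrier G" and K: "K \<subseteq> carrier G"
    and t: "t \<in> T" "t \<in> fixed_space n \<rho> K" "t \<notin> fixed_space n \<rho> H"
  obtains d \<sigma> x where "d < n" and "is_rep G d \<sigma>"
    and "x \<in> fixed_space d \<sigma> K" and "x \<notin> fixed_space d \<sigma> H"
proof -
  obtain d B L where "d \<le> n" and coords: "coord_system n T d B L"
    using subspace_coord_system[OF T] .
  have L: "L \<in> carrier_mat d n" using coords unfolding coord_system_def by simp
  have "t \<in> carrier_vec n" using t(2) unfolding fixed_space_def by simp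
  hence x: "L *\<^sub>v t \<in> carrier_vec d" using L by simp
  have Bx: "B *\<^sub>v (L *\<^sub>v t) = t" by (rule coord_system_basis_coords[OF coords t(1)])
  show thesis
  proof
    show "d < n" by (rule coord_system_dim_less[OF coords \<open>d \<le> n\<close> proper])
    show "is_rep G d (\<lambda>g. L * \<rho> g * B)" by (rule subrep_is_rep[OF rep stable coords])
    show "L *\<^sub>v t \<in> fixed_space d (\<lambda>g. L * \<rho> g * B) K"
      using subrep_fixed_space[OF rep stable coords K x] Bx t(2) by simp
    show "L *\<^sub>v t \<notin> fixed_space d (\<lambda>g. L * \<rho> g * B) H"
      using subrep_fixed_space[OF rep stable coords H x] Bx t(3) by simp
  qed
qed

section \<open>Maschke's theorem\<close>

lemma rep_conj_equivariant:
  fixes G :: "('g, 'b) monoid_scheme" (structure)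
  assumes grp: "group G" and rep: "is_rep G n \<rho>" and P: "P \<in> carrier_mat n n"
    and g: "g \<in> carrier G" and h: "h \<in> carrier G" and w: "w \<in> carrier_vec n"
  shows "\<rho> h *\<^sub>v ((\<rho> g * P * \<rho> (inv g)) *\<^sub>v w)
    = (\<rho> (h \<otimes> g) * P * \<rho> (inv (h \<otimes> g))) *\<^sub>v (\<rho> h *\<^sub>v w)"
proof -
  interpret group G by (rule grp)
  note \<rho> = rep_carrier_mat[OF rep]
  have hg: "h \<otimes> g \<in> carrier G" using g h by simp
  have y: "P *\<^sub>v (\<rho> (inv g) *\<^sub>v w) \<in> carrier_vec n" using P \<rho>[OF inv_closed[OF g]] w by simp
  have "\<rho> (inv (h \<otimes> g)) *\<^sub>v (\<rho> h *\<^sub>v w) = \<rho> (inv (h \<otimes> g) \<otimes> h) *\<^sub>v w"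
    using rep_mult_vec[OF rep inv_closed[OF hg] h w] by simp
  also have "inv (h \<otimes> g) \<otimes> h = inv g" using g h by (simp add: inv_mult_group m_assoc)
  finally have inv: "\<rho> (inv (h \<otimes> g)) *\<^sub>v (\<rho> h *\<^sub>v w) = \<rho> (inv g) *\<^sub>v w" .
  have "\<rho> h *\<^sub>v ((\<rho> g * P * \<rho> (inv g)) *\<^sub>v w) = \<rho> h *\<^sub>v (\<rho> g *\<^sub>v (P *\<^sub>v (\<rho> (inv g) *\<^sub>v w)))"
    by (simp add: assoc_mult_mat_vec3[OF \<rho>[OF g] P \<rho>[OF inv_closed[OF g]] w])
  also have "\<dots> = \<rho> (h \<otimes> g) *\<^sub>v (P *\<^sub>v (\<rho> (inv g) *\<^sub>v w))"
    using rep_mult_vec[OF rep h g y] by simp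
  also have "\<dots> = (\<rho> (h \<otimes> g) * P * \<rho> (inv (h \<otimes> g))) *\<^sub>v (\<rho> h *\<^sub>v w)"
    using assoc_mult_mat_vec3[OF \<rho>[OF hg] P \<rho>[OF inv_closed[OF hg]], of "\<rho> h *\<^sub>v w"] \<rho>[OF h] w inv
    by simp
  finally show ?thesis .
qed

lemma mat_sum_equivariant:
  fixes G :: "('g, 'b) monoid_scheme" (structure)
  assumes grp: "group G" and fin: "finite (carrier G)" and rep: "is_rep G n \<rho>"
    and F: "\<And>g. g \<in> carrier G \<Longrightarrow> F g \<in> carrier_mat n n"
    and F_equiv: "\<And>g h w. g \<in> carrier G \<Longrightarrow> h \<in> carrier G \<Longrightarrow> w \<in> carrier_vec n \<Longrightarrow>
      \<rho> h *\<^sub>v (F g *\<^sub>v w) = F (h \<otimes> g) *\<^sub>v (\<rho> h *\<^sub>v w)"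
    and h: "h \<in> carrier G" and w: "w \<in> carrier_vec n"
  shows "\<rho> h *\<^sub>v (mat n n (\<lambda>ij. \<Sum>g\<in>carrier G. F g $$ ij) *\<^sub>v w)
    = mat n n (\<lambda>ij. \<Sum>g\<in>carrier G. F g $$ ij) *\<^sub>v (\<rho> h *\<^sub>v w)"
proof -
  interpret group G by (rule grp)
  have hw: "\<rho> h *\<^sub>v w \<in> carrier_vec n" using rep_carrier_mat[OF rep h] w by simp
  have "\<rho> h *\<^sub>v (mat n n (\<lambda>ij. \<Sum>g\<in>carrier G. F g $$ ij) *\<^sub>v w)
      = \<rho> h *\<^sub>v finsum_vec TYPE(complex) n (\<lambda>g. F g *\<^sub>v w) (carrier G)"
    by (rule arg_cong[OF mat_sum_mult_vec[OF fin F w]])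
  also have "\<dots> = finsum_vec TYPE(complex) n (\<lambda>g. \<rho> h *\<^sub>v (F g *\<^sub>v w)) (carrier G)"
    by (rule mult_mat_finsum_vec[OF rep_carrier_mat[OF rep h] fin]) (use F w in \<open>meson mult_mat_vec_carrier\<close>)
  also have "\<dots> = finsum_vec TYPE(complex) n (\<lambda>g. F g *\<^sub>v (\<rho> h *\<^sub>v w)) (carrier G)"
  proof (rule finsum_vec_reindex_cong[OF _ fin])
    show "bij_betw (\<lambda>g. h \<otimes> g) (carrier G) (carrier G)"
      by (rule bij_betw_byWitness[where f' = "\<lambda>g. inv h \<otimes> g"]) (auto simp: h m_assoc[symmetric])
  qed (use mult_mat_vec_carrier[OF F hw] F_equiv h w in simp_all)
  also have "\<dots> = mat n n (\<lambda>ij. \<Sum>g\<in>carrier G. F g $$ ij) *\<^sub>v (\<rho> h *\<^sub>v w)"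
    by (rule mat_sum_mult_vec[OF fin F hw, symmetric])
  finally show ?thesis .
qed

lemma conj_projection_sum:
  fixes G :: "('g, 'b) monoid_scheme" (structure)
  assumes grp: "group G" and fin: "finite (carrier G)" and rep: "is_rep G n \<rho>"
    and S: "cvec_subspace n S" and stable: "G_stable G \<rho> S" and P: "P \<in> carrier_mat n n"
    and P_into: "\<And>w. w \<in> carrier_vec n \<Longrightarrow> P *\<^sub>v w \<in> S" and P_id: "\<And>s. s \<in> S \<Longrightarrow> P *\<^sub>v s = s"
  defines "M \<equiv> mat n n (\<lambda>ij. \<Sum>g\<in>carrier G. (\<rho> g * P * \<rho> (inv g)) $$ ij)"
  shows "\<forall>w \<in> carrier_vec n. M *\<^sub>v w \<in> S"
    and "\<forall>s \<in> S. M *\<^sub>v s = of_nat (card (carrier G)) \<cdot>\<^sub>v s"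
proof -
  interpret group G by (rule grp)
  note \<rho> = rep_carrier_mat[OF rep]
  have conj: "\<rho> g * P * \<rho> (inv g) \<in> carrier_mat n n" if "g \<in> carrier G" for g
    using \<rho>[OF that] \<rho>[OF inv_closed[OF that]] P by simp
  have conj_vec: "(\<rho> g * P * \<rho> (inv g)) *\<^sub>v w = \<rho> g *\<^sub>v (P *\<^sub>v (\<rho> (inv g) *\<^sub>v w))"
    if "g \<in> carrier G" and "w \<in> carrier_vec n" for g w
    by (rule assoc_mult_mat_vec3[OF \<rho>[OF that(1)] P \<rho>[OF inv_closed[OF that(1)]] that(2)])
  show "\<forall>w \<in> carrier_vec n. M *\<^sub>v w \<in> S"
  proof
    fix w :: "complex vec" assume w: "w \<in> carrier_vec n"
    have "M *\<^sub>v w = finsum_vec TYPE(complex) n (\<lambda>g. (\<rho> g * P * \<rho> (inv g)) *\<^sub>v w) (carrier G)"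
      unfolding M_def by (rule mat_sum_mult_vec[OF fin conj w])
    also have "\<dots> \<in> S"
    proof (rule finsum_vec_in_subspace[OF S fin])
      fix g assume g: "g \<in> carrier G"
      show "(\<rho> g * P * \<rho> (inv g)) *\<^sub>v w \<in> S"
        using stable g P_into \<rho>[OF inv_closed[OF g]] w unfolding conj_vec[OF g w] G_stable_def by simp
    qed
    finally show "M *\<^sub>v w \<in> S" .
  qed
  show "\<forall>s \<in> S. M *\<^sub>v s = of_nat (card (carrier G)) \<cdot>\<^sub>v s"
  proof
    fix s assume s: "s \<in> S"
    have sc: "s \<in> carrier_vec n" using S s unfolding cvec_subspace_def by auto
    have "(\<rho> g * P * \<rho> (inv g)) *\<^sub>v s = s" if g: "g \<in> carrier G" for g
    proof -
      have "\<rho> (inv g) *\<^sub>v s \<in> S" using stable s g unfolding G_stable_def by simp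
      thus ?thesis using P_id rep_inv_cancel[OF grp rep g sc] conj_vec[OF g sc] by simp
    qed
    hence "finsum_vec TYPE(complex) n (\<lambda>g. (\<rho> g * P * \<rho> (inv g)) *\<^sub>v s) (carrier G)
        = of_nat (card (carrier G)) \<cdot>\<^sub>v s"
      by (rule finsum_vec_const[OF fin sc])
    moreover have "M *\<^sub>v s = finsum_vec TYPE(complex) n (\<lambda>g. (\<rho> g * P * \<rho> (inv g)) *\<^sub>v s) (carrier G)"
      unfolding M_def by (rule mat_sum_mult_vec[OF fin conj sc])
    ultimately show "M *\<^sub>v s = of_nat (card (carrier G)) \<cdot>\<^sub>v s" by simp
  qed
qed

lemma maschke_equivariant_projection:
  fixes G :: "('g, 'b) monoid_scheme" (structure)
  assumes grp: "group G" and fin: "finite (carrier G)" and rep: "is_rep G n \<rho>"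
    and S: "cvec_subspace n S" and stable: "G_stable G \<rho> S"
  obtains M where "M \<in> carrier_mat n n"
    and "\<And>w. w \<in> carrier_vec n \<Longrightarrow> M *\<^sub>v w \<in> S"
    and "\<And>s. s \<in> S \<Longrightarrow> M *\<^sub>v s = s"
    and "\<And>g w. g \<in> carrier G \<Longrightarrow> w \<in> carrier_vec n \<Longrightarrow> \<rho> g *\<^sub>v (M *\<^sub>v w) = M *\<^sub>v (\<rho> g *\<^sub>v w)"
proof -
  interpret group G by (rule grp)
  obtain P where P: "P \<in> carrier_mat n n" and P_into: "\<And>w. w \<in> carrier_vec n \<Longrightarrow> P *\<^sub>v w \<in> S"
    and P_id: "\<And>s. s \<in> S \<Longrightarrow> P *\<^sub>v s = s"
    using subspace_projection[OF S] by blast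
  define M0 where "M0 = mat n n (\<lambda>ij. \<Sum>g\<in>carrier G. (\<rho> g * P * \<rho> (inv g)) $$ ij)"
  note M0 = conj_projection_sum[OF grp fin rep S stable P P_into P_id, folded M0_def]
  define c :: complex where "c = 1 / of_nat (card (carrier G))"
  have "card (carrier G) \<noteq> 0" using fin by (auto simp: card_eq_0_iff)
  hence c: "c * of_nat (card (carrier G)) = 1" unfolding c_def by simp
  have M0c: "M0 \<in> carrier_mat n n" unfolding M0_def by simp
  have S_carrier: "s \<in> carrier_vec n" if "s \<in> S" for s using S that unfolding cvec_subspace_def by auto
  show thesis
  proof
    show "c \<cdot>\<^sub>m M0 \<in> carrier_mat n n" using M0c by simp
    show "(c \<cdot>\<^sub>m M0) *\<^sub>v w \<in> S" if "w \<in> carrier_vec n" for w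
      using M0(1) that S unfolding smult_mat_mult_vec[OF M0c that] cvec_subspace_def by simp
    show "(c \<cdot>\<^sub>m M0) *\<^sub>v s = s" if "s \<in> S" for s
      using M0(2) that c S_carrier[OF that]
      by (simp add: smult_mat_mult_vec[OF M0c S_carrier[OF that]] smult_smult_assoc)
    show "\<rho> g *\<^sub>v ((c \<cdot>\<^sub>m M0) *\<^sub>v w) = (c \<cdot>\<^sub>m M0) *\<^sub>v (\<rho> g *\<^sub>v w)"
      if g: "g \<in> carrier G" and w: "w \<in> carrier_vec n" for g w
    proof -
      have \<rho>g: "\<rho> g \<in> carrier_mat n n" by (rule rep_carrier_mat[OF rep g])
      have conj: "\<rho> k * P * \<rho> (inv k) \<in> carrier_mat n n" if "k \<in> carrier G" for k
        using rep_carrier_mat[OF rep that] rep_carrier_mat[OF rep inv_closed[OF that]] P by simp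
      have "\<rho> g *\<^sub>v (M0 *\<^sub>v w) = M0 *\<^sub>v (\<rho> g *\<^sub>v w)"
        unfolding M0_def by (rule mat_sum_equivariant[OF grp fin rep conj rep_conj_equivariant[OF grp rep P] g w])
      thus ?thesis using \<rho>g M0c w
        by (simp add: smult_mat_mult_vec mult_mat_vec[OF \<rho>g])
    qed
  qed
qed

lemma equivariant_mat_kernel_stable:
  assumes rep: "is_rep G n \<rho>" and M: "M \<in> carrier_mat n n"
    and comm: "\<And>g w. g \<in> carrier G \<Longrightarrow> w \<in> carrier_vec n \<Longrightarrow> \<rho> g *\<^sub>v (M *\<^sub>v w) = M *\<^sub>v (\<rho> g *\<^sub>v w)"
  shows "G_stable G \<rho> (mat_kernel M)"
  unfolding G_stable_def
proof (intro ballI)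
  fix g w assume g: "g \<in> carrier G" and w: "w \<in> mat_kernel M"
  have wc: "w \<in> carrier_vec n" and Mw: "M *\<^sub>v w = 0\<^sub>v n" using mat_kernelD[OF M w] by auto
  have \<rho>g: "\<rho> g \<in> carrier_mat n n" by (rule rep_carrier_mat[OF rep g])
  hence "\<rho> g *\<^sub>v 0\<^sub>v n = 0\<^sub>v n" by auto
  hence "M *\<^sub>v (\<rho> g *\<^sub>v w) = 0\<^sub>v n" using comm[OF g wc] Mw by simp
  thus "\<rho> g *\<^sub>v w \<in> mat_kernel M" using \<rho>g wc by (intro mat_kernelI[OF M]) auto
qed

lemma proper_stable_subspace_with_fixed_vector:
  assumes grp: "group G" and fin: "finite (carrier G)" and rep: "is_rep G n \<rho>"
    and S: "cvec_subspace n S" and stable: "G_stable G \<rho> S"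
    and nonzero: "S \<noteq> {0\<^sub>v n}" and proper: "S \<noteq> carrier_vec n"
    and H: "H \<subseteq> carrier G" and K: "K \<subseteq> carrier G"
    and v: "v \<in> fixed_space n \<rho> K" "v \<notin> fixed_space n \<rho> H"
  obtains T t where "cvec_subspace n T" and "G_stable G \<rho> T" and "T \<noteq> carrier_vec n"
    and "t \<in> T" and "t \<in> fixed_space n \<rho> K" and "t \<notin> fixed_space n \<rho> H"
proof -
  obtain M where M: "M \<in> carrier_mat n n" and M_into: "\<And>w. w \<in> carrier_vec n \<Longrightarrow> M *\<^sub>v w \<in> S"
    and M_id: "\<And>s. s \<in> S \<Longrightarrow> M *\<^sub>v s = s"
    and M_comm: "\<And>g w. g \<in> carrier G \<Longrightarrow> w \<in> carrier_vec n \<Longrightarrow> \<rho> g *\<^sub>v (M *\<^sub>v w) = M *\<^sub>v (\<rho> g *\<^sub>v w)"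
    using maschke_equivariant_projection[OF grp fin rep S stable] by blast
  have vc: "v \<in> carrier_vec n" using v(1) unfolding fixed_space_def by simp
  define s where "s = M *\<^sub>v v"
  have s: "s \<in> S" unfolding s_def by (rule M_into[OF vc])
  have sc: "s \<in> carrier_vec n" unfolding s_def using M vc by simp
  have s_fixed: "s \<in> fixed_space n \<rho> K"
    using v(1) K M_comm vc sc unfolding s_def fixed_space_def by auto
  have s'_fixed: "v - s \<in> fixed_space n \<rho> K"
    by (rule cvec_subspace_diff[OF fixed_space_subspace[OF rep K] v(1) s_fixed])
  have s'_kernel: "v - s \<in> mat_kernel M"
  proof (rule mat_kernelI[OF M])
    show "v - s \<in> carrier_vec n" using vc sc by simp
    show "M *\<^sub>v (v - s) = 0\<^sub>v n"
      using mult_minus_distrib_mat_vec[OF M vc sc] M_id[OF s] sc unfolding s_def by simp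
  qed
  have kernel_stable: "G_stable G \<rho> (mat_kernel M)"
    by (rule equivariant_mat_kernel_stable[OF rep M M_comm])
  have kernel_proper: "mat_kernel M \<noteq> carrier_vec n"
  proof
    assume full: "mat_kernel M = carrier_vec n"
    obtain s0 where s0: "s0 \<in> S" "s0 \<noteq> 0\<^sub>v n" using nonzero S unfolding cvec_subspace_def by blast
    hence "s0 \<in> mat_kernel M" using full S unfolding cvec_subspace_def by blast
    hence "M *\<^sub>v s0 = 0\<^sub>v n" using mat_kernelD[OF M] by blast
    thus False using M_id[OF s0(1)] s0(2) by simp
  qed
  have "v = s + (v - s)" using vc sc by (intro eq_vecI) auto
  hence "s \<notin> fixed_space n \<rho> H \<or> v - s \<notin> fixed_space n \<rho> H"
    using v(2) fixed_space_subspace[OF rep H] unfolding cvec_subspace_def by metis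
  thus thesis
  proof
    assume "s \<notin> fixed_space n \<rho> H"
    with S stable proper s s_fixed show thesis by (rule that)
  next
    assume "v - s \<notin> fixed_space n \<rho> H"
    with mat_kernel_subspace[OF M] kernel_stable kernel_proper s'_kernel s'_fixed show thesis by (rule that)
  qed
qed

lemma simple_rep_with_fixed_vector:
  assumes grp: "group G" and fin: "finite (carrier G)"
    and H: "H \<subseteq> carrier G" and K: "K \<subseteq> carrier G"
    and "is_rep G n \<rho>" and "v \<in> fixed_space n \<rho> K" and "v \<notin> fixed_space n \<rho> H"
  shows "\<exists>m \<sigma> x. simple_rep G m \<sigma> \<and> x \<in> fixed_space m \<sigma> K \<and> x \<notin> fixed_space m \<sigma> H"
  using assms(5-7)
proof (induction n arbitrary: \<rho> v rule: less_induct)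
  case (less n)
  show ?case
  proof (cases "simple_rep G n \<rho>")
    case True
    thus ?thesis using less.prems by blast
  next
    case False
    have "n \<noteq> 0" \<comment> \<open>in dimension \<open>0\<close> every vector is fixed\<close>
    proof
      assume "n = 0"
      have "\<rho> h *\<^sub>v v = v" if "h \<in> H" for h
      proof -
        have "\<rho> h \<in> carrier_mat 0 0" using rep_carrier_mat[OF less.prems(1)] H that \<open>n = 0\<close> by auto
        thus ?thesis using less.prems(2) \<open>n = 0\<close> unfolding fixed_space_def by (intro eq_vecI) auto
      qed
      thus False using less.prems(2,3) unfolding fixed_space_def by auto
    qed
    then obtain S where "cvec_subspace n S" "G_stable G \<rho> S" "S \<noteq> {0\<^sub>v n}" "S \<noteq> carrier_vec n"
      using False less.prems(1) unfolding simple_rep_def by blast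
    then obtain T t where "cvec_subspace n T" "G_stable G \<rho> T" "T \<noteq> carrier_vec n"
      and "t \<in> T" "t \<in> fixed_space n \<rho> K" "t \<notin> fixed_space n \<rho> H"
      using proper_stable_subspace_with_fixed_vector[OF grp fin less.prems(1) _ _ _ _ H K less.prems(2,3)]
      by blast
    then obtain d \<sigma> x where "d < n" "is_rep G d \<sigma>" "x \<in> fixed_space d \<sigma> K" "x \<notin> fixed_space d \<sigma> H"
      using proper_subrep_with_fixed_vector[OF less.prems(1) _ _ _ H K] by blast
    thus ?thesis by (rule less.IH)
  qed
qed

section \<open>The regular representation\<close>

text \<open>For a bijection \<open>e\<close> from \<open>{..<N}\<close> onto \<open>carrier G\<close>, this is the left regular module \<open>\<complex>G\<close>
  written in the basis of group elements.\<close>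

definition left_regular_rep :: "('g, 'b) monoid_scheme \<Rightarrow> (nat \<Rightarrow> 'g) \<Rightarrow> nat \<Rightarrow> 'g \<Rightarrow> complex mat" where
  "left_regular_rep G e N g = mat N N (\<lambda>(i,j). if e i = g \<otimes>\<^bsub>G\<^esub> e j then 1 else 0)"

lemma left_regular_rep_carrier: "left_regular_rep G e N g \<in> carrier_mat N N"
  unfolding left_regular_rep_def by simp

context
  fixes G :: "('g, 'b) monoid_scheme" (structure) and e :: "nat \<Rightarrow> 'g" and N :: nat
  assumes grp: "group G" and e: "bij_betw e {..<N} (carrier G)"
begin

private lemma index_of:
  assumes "y \<in> carrier G"
  shows "the_inv_into {..<N} e y < N" and "e (the_inv_into {..<N} e y) = y"
  using assms e the_inv_into_into[of e "{..<N}" y "{..<N}"] f_the_inv_into_f_bij_betw[OF e]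
  unfolding bij_betw_def by auto

private lemma e_inj: "i < N \<Longrightarrow> j < N \<Longrightarrow> e i = e j \<longleftrightarrow> i = j"
  using e unfolding bij_betw_def inj_on_def by auto

private lemma e_carrier: "i < N \<Longrightarrow> e i \<in> carrier G"
  using e unfolding bij_betw_def by auto

lemma left_regular_rep_mult_vec:
  assumes g: "g \<in> carrier G" and v: "v \<in> carrier_vec N" and i: "i < N"
  shows "(left_regular_rep G e N g *\<^sub>v v) $ i = v $ the_inv_into {..<N} e (inv g \<otimes> e i)"
proof -
  interpret group G by (rule grp)
  define j where "j = the_inv_into {..<N} e (inv g \<otimes> e i)"
  have j: "j < N" "e j = inv g \<otimes> e i"
    unfolding j_def using index_of g e_carrier[OF i] by simp_all
  have eq: "(e i = g \<otimes> e k) = (k = j)" if k: "k < N" for k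
    using inv_solve_left[OF e_carrier[OF k] g e_carrier[OF i]] e_inj[OF k j(1)] j(2) by auto
  have "(left_regular_rep G e N g *\<^sub>v v) $ i = (\<Sum>k<N. (if e i = g \<otimes> e k then 1 else 0) * v $ k)"
    by (subst index_mult_mat_vec_sum[OF left_regular_rep_carrier v i])
      (auto simp: left_regular_rep_def i intro: sum.cong)
  also have "\<dots> = (\<Sum>k<N. if k = j then v $ k else 0)" using eq by (intro sum.cong refl) simp
  also have "\<dots> = v $ j" using j(1) by simp
  finally show ?thesis unfolding j_def .
qed

lemma left_regular_rep_is_rep: "is_rep G N (left_regular_rep G e N)"
  unfolding is_rep_def
proof (intro conjI ballI)
  interpret group G by (rule grp)
  show "left_regular_rep G e N g \<in> carrier_mat N N" for g
    by (rule left_regular_rep_carrier)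
  show "left_regular_rep G e N \<one> = 1\<^sub>m N"
    unfolding left_regular_rep_def using e_carrier e_inj by (intro eq_matI) auto
  fix g h assume g: "g \<in> carrier G" and h: "h \<in> carrier G"
  show "left_regular_rep G e N (g \<otimes> h) = left_regular_rep G e N g * left_regular_rep G e N h"
  proof (rule eq_mat_by_mult_vec[where nr = N and nc = N])
    fix v :: "complex vec" assume v: "v \<in> carrier_vec N"
    let ?idx = "\<lambda>y. the_inv_into {..<N} e y"
    show "left_regular_rep G e N (g \<otimes> h) *\<^sub>v v = (left_regular_rep G e N g * left_regular_rep G e N h) *\<^sub>v v"
    proof (rule eq_vecI)
      fix i assume "i < dim_vec ((left_regular_rep G e N g * left_regular_rep G e N h) *\<^sub>v v)"
      hence i: "i < N" by (simp add: left_regular_rep_def)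
      have ginv: "inv g \<otimes> e i \<in> carrier G" using g e_carrier[OF i] by simp
      have hv: "left_regular_rep G e N h *\<^sub>v v \<in> carrier_vec N"
        by (rule mult_mat_vec_carrier[OF left_regular_rep_carrier v])
      have "((left_regular_rep G e N g * left_regular_rep G e N h) *\<^sub>v v) $ i
          = (left_regular_rep G e N g *\<^sub>v (left_regular_rep G e N h *\<^sub>v v)) $ i"
        by (simp add: assoc_mult_mat_vec[OF left_regular_rep_carrier left_regular_rep_carrier v])
      also have "\<dots> = v $ ?idx (inv h \<otimes> (inv g \<otimes> e i))"
        using left_regular_rep_mult_vec[OF g hv i] left_regular_rep_mult_vec[OF h v index_of(1)[OF ginv]]
          index_of(2)[OF ginv] by simp
      also have "\<dots> = (left_regular_rep G e N (g \<otimes> h) *\<^sub>v v) $ i"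
        using left_regular_rep_mult_vec[OF _ v i, of "g \<otimes> h"] g h e_carrier[OF i]
        by (simp add: inv_mult_group m_assoc)
      finally show "(left_regular_rep G e N (g \<otimes> h) *\<^sub>v v) $ i
          = ((left_regular_rep G e N g * left_regular_rep G e N h) *\<^sub>v v) $ i" by simp
    qed (simp add: left_regular_rep_def)
  qed (rule left_regular_rep_carrier mult_carrier_mat[OF left_regular_rep_carrier left_regular_rep_carrier])+
qed

lemma left_regular_rep_subgroup_indicator:
  assumes K: "subgroup K G" and h: "h \<in> carrier G" "h \<notin> K"
  defines "v \<equiv> vec N (\<lambda>i. if e i \<in> K then 1 else 0)"
  shows "v \<in> fixed_space N (left_regular_rep G e N) K"
    and "v \<notin> fixed_space N (left_regular_rep G e N) {h}"
proof -
  interpret group G by (rule grp)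
  have v: "v \<in> carrier_vec N" unfolding v_def by simp
  have entry: "(left_regular_rep G e N g *\<^sub>v v) $ i = (if inv g \<otimes> e i \<in> K then 1 else 0)"
    if g: "g \<in> carrier G" and i: "i < N" for g i
    using left_regular_rep_mult_vec[OF g v i] index_of[of "inv g \<otimes> e i"] g e_carrier[OF i]
    unfolding v_def by simp
  have "left_regular_rep G e N k *\<^sub>v v = v" if k: "k \<in> K" for k
  proof (rule eq_vecI)
    have kc: "k \<in> carrier G" using subgroup.subset[OF K] k by blast
    fix i assume "i < dim_vec v"
    hence i: "i < N" unfolding v_def by simp
    have "inv k \<otimes> e i \<in> K \<longleftrightarrow> e i \<in> K"
    proof
      assume "inv k \<otimes> e i \<in> K"
      hence "k \<otimes> (inv k \<otimes> e i) \<in> K" by (rule subgroup.m_closed[OF K k])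
      thus "e i \<in> K" using kc e_carrier[OF i] by (simp add: m_assoc[symmetric])
    next
      assume "e i \<in> K"
      thus "inv k \<otimes> e i \<in> K" by (rule subgroup.m_closed[OF K subgroup.m_inv_closed[OF K k]])
    qed
    thus "(left_regular_rep G e N k *\<^sub>v v) $ i = v $ i" using entry[OF kc i] i unfolding v_def by simp
  qed (simp add: v_def left_regular_rep_def)
  thus "v \<in> fixed_space N (left_regular_rep G e N) K" using v unfolding fixed_space_def by blast
  have "(left_regular_rep G e N h *\<^sub>v v) $ the_inv_into {..<N} e h = 1"
    using entry[OF h(1) index_of(1)[OF h(1)]] index_of(2)[OF h(1)] h(1) subgroup.one_closed[OF K] by simp
  moreover have "v $ the_inv_into {..<N} e h = 0"
    using index_of[OF h(1)] h(2) unfolding v_def by simp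
  ultimately show "v \<notin> fixed_space N (left_regular_rep G e N) {h}" unfolding fixed_space_def by auto
qed

end

lemma simple_rep_moving_subgroup_fixed_vector:
  assumes grp: "group G" and fin: "finite (carrier G)"
    and K: "subgroup K G" and h: "h \<in> carrier G" "h \<notin> K"
  shows "\<exists>m \<sigma> x. simple_rep G m \<sigma> \<and> x \<in> fixed_space m \<sigma> K \<and> x \<notin> fixed_space m \<sigma> {h}"
proof -
  obtain e where e: "bij_betw e {..<card (carrier G)} (carrier G)"
    using ex_bij_betw_nat_finite[OF fin] unfolding atLeast0LessThan by blast
  show ?thesis
    using simple_rep_with_fixed_vector[OF grp fin _ subgroup.subset[OF K] left_regular_rep_is_rep[OF grp e]
        left_regular_rep_subgroup_indicator[OF grp e K h]] h(1)
    by blast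
qed

theorem lemma3p2:
  fixes G :: "('g, 'b) monoid_scheme" and H K :: "'g set"
  assumes "group G" and "finite (carrier G)"
    and "subgroup H G" and "subgroup K G" and "H \<noteq> K"
  shows "\<exists>n \<rho>. simple_rep G n \<rho> \<and> fixed_space n \<rho> H \<noteq> fixed_space n \<rho> K"
proof -
  have separate: "\<exists>n \<rho>. simple_rep G n \<rho> \<and> fixed_space n \<rho> A \<noteq> fixed_space n \<rho> C"
    if A: "subgroup A G" and C: "subgroup C G" and h: "h \<in> A" "h \<notin> C" for A C h
  proof -
    obtain m \<sigma> x where "simple_rep G m \<sigma>" "x \<in> fixed_space m \<sigma> C" "x \<notin> fixed_space m \<sigma> {h}"
      using simple_rep_moving_subgroup_fixed_vector[OF assms(1,2) C _ h(2)] subgroup.subset[OF A] h(1)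
      by blast
    moreover have "fixed_space m \<sigma> A \<subseteq> fixed_space m \<sigma> {h}" using h(1) by (intro fixed_space_antimono) simp
    ultimately show ?thesis by blast
  qed
  obtain h where "h \<in> H \<and> h \<notin> K \<or> h \<in> K \<and> h \<notin> H" using \<open>H \<noteq> K\<close> by blast
  thus ?thesis using separate[OF assms(3,4)] separate[OF assms(4,3)] by metis
qed

end
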